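(* Let $(a_\nu)_{\nu\in\mathbb{N}}\subset\mathbb{R}\setminus\{0\}$ with $\sum_{\nu=1}^\infty a_\nu^{-2}<\infty$, let $g$ and $g_n$ ($n\in\mathbb{N}$) be the functions with Fourier transforms $$\hat g(\omega)=\prod_{\nu=1}^{\infty}\frac{e^{2\pi i\omega/a_\nu}}{1+2\pi i\omega/a_\nu},\qquad \hat g_n(\omega)=\prod_{\nu=1}^{n}\frac{e^{2\pi i\omega/a_\nu}}{1+2\pi i\omega/a_\nu},$$ and let $a_0:=\min_{\nu\in\mathbb{N}}|a_\nu|$. Then for every $0\le\sigma<a_0$, $$\lim_{n\to\infty}|g(x)-g_n(x)|\,e^{\sigma|x|}=0$$ uniformly for $x\in\mathbb{R}$.
   Context: The Fourier transform is $\hat f(\omega)=\int_{\mathbb{R}} f(t)e^{-2\pi i t\omega}\,dt$. *)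

theory Defs
  imports "HOL-Analysis.Analysis"
begin

text \<open>Fourier transform convention: \<open>f^(w) = \<integral> f(t) e^(-2 pi i t w) dt\<close>;
  hence a function with (integrable) Fourier transform \<open>F\<close> is recovered by the
  inverse transform \<open>f(x) = \<integral> F(w) e^(2 pi i x w) dw\<close>.\<close>

definition inv_fourier :: "(real \<Rightarrow> complex) \<Rightarrow> real \<Rightarrow> complex" where
  "inv_fourier F x = integral\<^sup>L lborel (\<lambda>w. F w * exp (2 * pi * \<i> * of_real x * of_real w))"

definition pf_factor :: "real \<Rightarrow> real \<Rightarrow> complex" where
  "pf_factor a w = exp (2 * pi * \<i> * of_real w / of_real a) / (1 + 2 * pi * \<i> * of_real w / of_real a)"

text \<open>The sequence is \<open>a 1, a 2, \<dots>\<close> (the value \<open>a 0\<close> is not used).\<close>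
definition ghat :: "(nat \<Rightarrow> real) \<Rightarrow> real \<Rightarrow> complex" where
  "ghat a w = prodinf (\<lambda>\<nu>. pf_factor (a (Suc \<nu>)) w)"

definition ghat_n :: "(nat \<Rightarrow> real) \<Rightarrow> nat \<Rightarrow> real \<Rightarrow> complex" where
  "ghat_n a n w = (\<Prod>\<nu>\<in>{1..n}. pf_factor (a \<nu>) w)"

definition g :: "(nat \<Rightarrow> real) \<Rightarrow> real \<Rightarrow> complex" where
  "g a = inv_fourier (ghat a)"

definition g_n :: "(nat \<Rightarrow> real) \<Rightarrow> nat \<Rightarrow> real \<Rightarrow> complex" where
  "g_n a n = inv_fourier (ghat_n a n)"

end

theory Submission
  imports Defs "HOL-Complex_Analysis.Complex_Analysis" "HOL-Probability.Sinc_Integral"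
    "HOL-Real_Asymp.Real_Asymp"
begin

(* The partial products ghat_n extend holomorphically to the strip 2 pi |Im z| < a0, where every
   factor satisfies |e^u/(1+u) - 1| = O(1/a_nu^2); for n >= 2 the first two factors give decay
   1/(1 + (Re z)^2) uniformly in n on each closed substrip, and the partial products converge to
   ghat.  Moving the inversion integral of ghat_n to the line Im z = tau, |tau| <= sigma/(2 pi),
   multiplies it by e^{-2 pi x tau}; choosing tau = sign(x) sigma/(2 pi) and letting m -> infinity in
   |g_m(x) - g_n(x)| bounds |g(x) - g_n(x)| e^{sigma |x|} by the L^1 distance of ghat_n and ghat on
   one of the two lines, which tends to 0 by dominated convergence. *)

lemma integrable_lborel_decay:
  fixes \<phi> :: "real \<Rightarrow> 'a::{banach, second_countable_topology}"
  assumes "\<phi> \<in> borel_measurable lborel" and "\<And>x. norm (\<phi> x) \<le> B / (1 + x^2)"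
  shows "integrable lborel \<phi>"
proof (rule Bochner_Integration.integrable_bound)
  show "integrable lborel (\<lambda>x. B * inverse (1 + x^2))"
    using integrable_inverse_1_plus_square by (simp add: set_integrable_def)
  show "AE x in lborel. norm (\<phi> x) \<le> norm (B * inverse (1 + x^2))"
    using assms(2) abs_ge_self[of B] by (intro AE_I2) (force simp: divide_inverse abs_mult
        intro: order_trans mult_right_mono)
qed fact

lemma norm_integral_diff_le:
  fixes f h :: "real \<Rightarrow> 'a::{banach, second_countable_topology}"
  assumes "integrable lborel f" "integrable lborel h"
  shows "norm (integral\<^sup>L lborel f - integral\<^sup>L lborel h) \<le> integral\<^sup>L lborel (\<lambda>x. norm (f x - h x))"
  using integral_norm_bound[of lborel "\<lambda>x. f x - h x"] Bochner_Integration.integral_diff[OF assms]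
  by simp

lemma LIMSEQ_integral_symmetric_Icc:
  fixes \<phi> :: "real \<Rightarrow> 'a::euclidean_space"
  assumes "integrable lborel \<phi>"
  shows "(\<lambda>n::nat. integral {-real n..real n} \<phi>) \<longlonglongrightarrow> integral\<^sup>L lborel \<phi>"
proof -
  have "integral {-real n..real n} \<phi> = integral\<^sup>L lborel (\<lambda>x. indicator {-real n..real n} x *\<^sub>R \<phi> x)" for n
    using set_borel_integral_eq_integral(2)[of "{-real n..real n}" \<phi>] assms
    by (simp add: set_integrable_def set_lebesgue_integral_def integrable_mult_indicator)
  moreover have "(\<lambda>n. integral\<^sup>L lborel (\<lambda>x. indicator {-real n..real n} x *\<^sub>R \<phi> x)) \<longlonglongrightarrow> integral\<^sup>L lborel \<phi>"
  proof (rule integral_dominated_convergence[where w = "\<lambda>x. norm (\<phi> x)"])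
    show "AE x in lborel. (\<lambda>n. indicator {-real n..real n} x *\<^sub>R \<phi> x) \<longlonglongrightarrow> \<phi> x"
    proof (intro AE_I2 tendsto_eventually)
      fix x :: real
      obtain N :: nat where "\<bar>x\<bar> \<le> real N" using real_arch_simple by blast
      then show "\<forall>\<^sub>F n in sequentially. indicator {-real n..real n} x *\<^sub>R \<phi> x = \<phi> x"
        unfolding eventually_sequentially by (intro exI[of _ N]) (auto simp: indicator_def)
    qed
  qed (use assms in \<open>auto simp: indicator_def\<close>)
  ultimately show ?thesis by simp
qed

lemma uniform_limit_by_LIMSEQ_bound:
  assumes "\<And>n x. x \<in> S \<Longrightarrow> norm (f n x) \<le> b n" and "b \<longlonglongrightarrow> 0"
  shows "uniform_limit S f (\<lambda>_. 0) sequentially"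
proof (rule uniform_limitI)
  fix e :: real assume "0 < e"
  with \<open>b \<longlonglongrightarrow> 0\<close> have "\<forall>\<^sub>F n in sequentially. b n < e"
    by (rule order_tendstoD)
  then show "\<forall>\<^sub>F n in sequentially. \<forall>x\<in>S. dist (f n x) 0 < e"
    by eventually_elim (auto simp: dist_norm intro: le_less_trans[OF assms(1)])
qed

section \<open>Shifting a line integral across a strip\<close>

definition hline :: "real \<Rightarrow> real \<Rightarrow> complex" where
  "hline \<tau> x = of_real x + \<i> * of_real \<tau>"

lemma hline_simps [simp]: "Re (hline \<tau> x) = x" "Im (hline \<tau> x) = \<tau>" "hline 0 x = of_real x"
  by (simp_all add: hline_def)

lemma continuous_on_hline [continuous_intros]: "continuous_on A (hline \<tau>)"
  unfolding hline_def by (intro continuous_intros)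

lemma has_contour_integral_linepath_shift:
  "(f has_contour_integral I) (linepath (a + c) (b + c)) \<longleftrightarrow>
   ((\<lambda>z. f (z + c)) has_contour_integral I) (linepath a b)"
  unfolding has_contour_integral_linepath by (simp add: linepath_def algebra_simps)

lemma has_integral_hline_primitive:
  assumes F: "\<And>z. z \<in> S \<Longrightarrow> (F has_field_derivative f z) (at z within S)" and "convex S"
    and "hline \<tau> (-R) \<in> S" "hline \<tau> R \<in> S" and "0 < R"
  shows "((\<lambda>x. f (hline \<tau> x)) has_integral (F (hline \<tau> R) - F (hline \<tau> (-R)))) {-R..R}"
proof -
  have "(f has_contour_integral (F (hline \<tau> R) - F (hline \<tau> (-R)))) (linepath (hline \<tau> (-R)) (hline \<tau> R))"
    using contour_integral_primitive[OF F valid_path_linepath] closed_segment_subset[OF _ _ \<open>convex S\<close>] assms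
    by simp
  then have "((\<lambda>z. f (z + \<i> * of_real \<tau>)) has_contour_integral (F (hline \<tau> R) - F (hline \<tau> (-R))))
      (linepath (of_real (-R)) (of_real R))"
    by (simp only: hline_def has_contour_integral_linepath_shift of_real_minus)
  then show ?thesis
    using has_contour_integral_linepath_Reals_iff \<open>0 < R\<close> by (simp add: hline_def)
qed

lemma closed_segment_vertical:
  "closed_segment (of_real R) (hline \<tau> R) \<subseteq> {z. Re z = R \<and> min 0 \<tau> \<le> Im z \<and> Im z \<le> max 0 \<tau>}"
proof (rule closed_segment_subset)
  have "{z. Re z = R \<and> min 0 \<tau> \<le> Im z \<and> Im z \<le> max 0 \<tau>} =
      {z. Re z \<le> R} \<inter> {z. Re z \<ge> R} \<inter> {z. Im z \<ge> min 0 \<tau>} \<inter> {z. Im z \<le> max 0 \<tau>}"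
    by auto
  then show "convex {z. Re z = R \<and> min 0 \<tau> \<le> Im z \<and> Im z \<le> max 0 \<tau>}"
    by (simp only: convex_Int convex_halfspace_Re_le convex_halfspace_Re_ge
        convex_halfspace_Im_ge convex_halfspace_Im_le)
qed auto

lemma norm_primitive_vertical_le:
  assumes F: "\<And>z. z \<in> S \<Longrightarrow> (F has_field_derivative f z) (at z within S)"
    and seg: "closed_segment (of_real R) (hline \<tau> R) \<subseteq> S"
    and bound: "\<And>z. z \<in> closed_segment (of_real R) (hline \<tau> R) \<Longrightarrow> norm (f z) \<le> C"
  shows "norm (F (hline \<tau> R) - F (of_real R)) \<le> C * \<bar>\<tau>\<bar>"
proof -
  have "(f has_contour_integral (F (hline \<tau> R) - F (of_real R))) (linepath (of_real R) (hline \<tau> R))"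
    using contour_integral_primitive[OF F valid_path_linepath] seg by simp
  moreover have "0 \<le> C"
    using bound[of "of_real R"] norm_ge_zero[of "f (of_real R)"] by (simp del: norm_ge_zero)
  ultimately have "norm (F (hline \<tau> R) - F (of_real R)) \<le> C * norm (hline \<tau> R - of_real R)"
    using bound by (intro has_contour_integral_bound_linepath)
  then show ?thesis by (simp add: hline_def norm_mult)
qed

lemma lebesgue_integral_hline_shift:
  fixes f :: "complex \<Rightarrow> complex"
  assumes hol: "f holomorphic_on S" and S: "open S" "convex S"
    and strip: "\<And>z. min 0 \<tau> \<le> Im z \<Longrightarrow> Im z \<le> max 0 \<tau> \<Longrightarrow> z \<in> S"
    and decay: "\<And>z. min 0 \<tau> \<le> Im z \<Longrightarrow> Im z \<le> max 0 \<tau> \<Longrightarrow> norm (f z) \<le> B / (1 + (Re z)^2)"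
  shows "integrable lborel (\<lambda>x. f (hline \<tau> x))"
    and "integral\<^sup>L lborel (\<lambda>x. f (of_real x)) = integral\<^sup>L lborel (\<lambda>x. f (hline \<tau> x))"
proof -
  have int: "integrable lborel (\<lambda>x. f (hline t x))" if "t \<in> {0, \<tau>}" for t
  proof (rule integrable_lborel_decay)
    have "continuous_on UNIV (\<lambda>x. f (hline t x))"
      using that strip by (intro continuous_on_compose2[OF holomorphic_on_imp_continuous_on[OF hol]]
          continuous_intros) auto
    then show "(\<lambda>x. f (hline t x)) \<in> borel_measurable lborel"
      by (simp add: borel_measurable_continuous_onI)
    show "norm (f (hline t x)) \<le> B / (1 + x^2)" for x
      using that decay[of "hline t x"] by auto
  qed
  then show "integrable lborel (\<lambda>x. f (hline \<tau> x))" by simp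
  obtain F where F: "\<And>z. z \<in> S \<Longrightarrow> (F has_field_derivative f z) (at z within S)"
    using holomorphic_convex_primitive'[OF S(2,1) hol] by blast
  have truncated: "integral {-R..R} (\<lambda>x. f (hline t x)) = F (hline t R) - F (hline t (-R))"
    if "t \<in> {0, \<tau>}" "0 < R" for t R
    using that strip by (intro integral_unique has_integral_hline_primitive[OF F S(2)]) auto
  have side: "norm (F (hline \<tau> R) - F (of_real R)) \<le> B / (1 + R^2) * \<bar>\<tau>\<bar>" for R
    using closed_segment_vertical[of R \<tau>] strip decay
    by (intro norm_primitive_vertical_le[OF F]) auto
  \<comment> \<open>On [-R, R] the two line integrals differ by the vertical sides of a rectangle, which are O(1/R^2).\<close>
  define \<Delta> where "\<Delta> n = integral {-real n..real n} (\<lambda>x. f (of_real x))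
    - integral {-real n..real n} (\<lambda>x. f (hline \<tau> x))" for n
  have "(\<lambda>n. \<Delta> (Suc n)) \<longlonglongrightarrow> integral\<^sup>L lborel (\<lambda>x. f (of_real x)) - integral\<^sup>L lborel (\<lambda>x. f (hline \<tau> x))"
    unfolding \<Delta>_def using int[of 0] int[of \<tau>]
    by (intro LIMSEQ_Suc tendsto_diff LIMSEQ_integral_symmetric_Icc) auto
  moreover have "(\<lambda>n. \<Delta> (Suc n)) \<longlonglongrightarrow> 0"
  proof (rule Lim_null_comparison)
    show "\<forall>\<^sub>F n in sequentially. norm (\<Delta> (Suc n)) \<le> 2 * B * \<bar>\<tau>\<bar> / (1 + (real n + 1)^2)"
    proof (intro always_eventually allI)
      fix n
      define R where "R = real (Suc n)"
      have "\<Delta> (Suc n) = (F (hline \<tau> (-R)) - F (of_real (-R))) - (F (hline \<tau> R) - F (of_real R))"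
        using truncated[of 0 R] truncated[of \<tau> R] by (simp add: \<Delta>_def R_def)
      also have "norm \<dots> \<le> B / (1 + (-R)^2) * \<bar>\<tau>\<bar> + B / (1 + R^2) * \<bar>\<tau>\<bar>"
        by (intro norm_triangle_le_diff add_mono side)
      also have "\<dots> = 2 * B * \<bar>\<tau>\<bar> / (1 + R^2)"
        by simp
      finally show "norm (\<Delta> (Suc n)) \<le> 2 * B * \<bar>\<tau>\<bar> / (1 + (real n + 1)^2)"
        by (simp add: R_def add.commute)
    qed
    show "(\<lambda>n. 2 * B * \<bar>\<tau>\<bar> / (1 + (real n + 1)^2)) \<longlonglongrightarrow> 0"
      by real_asymp
  qed
  ultimately show "integral\<^sup>L lborel (\<lambda>x. f (of_real x)) = integral\<^sup>L lborel (\<lambda>x. f (hline \<tau> x))"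
    using LIMSEQ_unique by fastforce
qed

section \<open>Holomorphic approximation in a strip and weighted convergence\<close>

definition fourier_kernel :: "real \<Rightarrow> complex \<Rightarrow> complex" where
  "fourier_kernel x z = exp (2 * pi * \<i> * of_real x * z)"

lemma norm_fourier_kernel: "norm (fourier_kernel x z) = exp (- (2 * pi * x * Im z))"
  by (simp add: fourier_kernel_def)

lemma norm_fourier_kernel_le:
  assumes "\<bar>Im z\<bar> \<le> t"
  shows "norm (fourier_kernel x z) \<le> exp (2 * pi * \<bar>x\<bar> * t)"
proof -
  have "- (x * Im z) \<le> \<bar>x\<bar> * t"
    using abs_ge_minus_self[of "x * Im z"] mult_left_mono[OF assms abs_ge_zero[of x]]
    by (simp add: abs_mult)
  then have "- (2 * pi * x * Im z) \<le> 2 * pi * \<bar>x\<bar> * t"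
    using mult_left_mono[of _ _ "2 * pi"] by fastforce
  then show ?thesis by (simp add: norm_fourier_kernel)
qed

lemma inv_fourier_eq_kernel: "inv_fourier F x = integral\<^sup>L lborel (\<lambda>w. F w * fourier_kernel x (of_real w))"
  by (simp add: inv_fourier_def fourier_kernel_def)

lemma open_convex_horizontal_strip: "open {z. \<bar>Im z\<bar> < t}" "convex {z. \<bar>Im z\<bar> < t}"
proof -
  have eq: "{z. \<bar>Im z\<bar> < t} = {z. Im z < t} \<inter> {z. Im z > - t}" by auto
  show "open {z. \<bar>Im z\<bar> < t}" "convex {z. \<bar>Im z\<bar> < t}"
    unfolding eq by (simp_all add: open_Int convex_Int open_halfspace_Im_lt open_halfspace_Im_gt
        convex_halfspace_Im_lt convex_halfspace_Im_gt)
qed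

locale holomorphic_strip_approx =
  fixes G :: "nat \<Rightarrow> complex \<Rightarrow> complex" and G_lim :: "complex \<Rightarrow> complex" and t0 t1 K :: real
  assumes width_nonneg: "0 \<le> t0" and width_less: "t0 < t1"
    and holomorphic: "\<And>n. G n holomorphic_on {z. \<bar>Im z\<bar> < t1}"
    and decay: "\<And>n z. \<bar>Im z\<bar> \<le> t0 \<Longrightarrow> norm (G n z) \<le> K / (1 + (Re z)^2)"
    and LIMSEQ: "\<And>z. \<bar>Im z\<bar> \<le> t0 \<Longrightarrow> (\<lambda>n. G n z) \<longlonglongrightarrow> G_lim z"
begin

lemma K_nonneg: "0 \<le> K"
  using order_trans[OF norm_ge_zero decay[of 0 0]] width_nonneg by simp

lemma G_lim_decay: "\<bar>Im z\<bar> \<le> t0 \<Longrightarrow> norm (G_lim z) \<le> K / (1 + (Re z)^2)"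
  using decay by (intro tendsto_le[OF _ tendsto_const tendsto_norm[OF LIMSEQ]]) auto

lemma measurable_G_hline:
  assumes "\<bar>\<tau>\<bar> \<le> t0"
  shows "(\<lambda>\<omega>. G n (hline \<tau> \<omega>)) \<in> borel_measurable lborel"
proof -
  have "continuous_on UNIV (\<lambda>\<omega>. G n (hline \<tau> \<omega>))"
    using assms width_less
    by (intro continuous_on_compose2[OF holomorphic_on_imp_continuous_on[OF holomorphic]
          continuous_on_hline]) auto
  then show ?thesis by (simp add: borel_measurable_continuous_onI)
qed

lemma measurable_G_lim_hline:
  assumes "\<bar>\<tau>\<bar> \<le> t0"
  shows "(\<lambda>\<omega>. G_lim (hline \<tau> \<omega>)) \<in> borel_measurable lborel"
  using assms by (intro borel_measurable_LIMSEQ_metric[OF measurable_G_hline[OF assms] LIMSEQ]) simp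

lemma tendsto_integral_norm_diff:
  assumes "\<bar>\<tau>\<bar> \<le> t0" and h: "h \<in> borel_measurable lborel" "\<And>\<omega>. norm (h \<omega>) \<le> K / (1 + \<omega>^2)"
  shows "(\<lambda>n. integral\<^sup>L lborel (\<lambda>\<omega>. norm (G n (hline \<tau> \<omega>) - h \<omega>)))
    \<longlonglongrightarrow> integral\<^sup>L lborel (\<lambda>\<omega>. norm (G_lim (hline \<tau> \<omega>) - h \<omega>))"
proof (rule integral_dominated_convergence[where w = "\<lambda>\<omega>. 2 * K * inverse (1 + \<omega>^2)"])
  show "integrable lborel (\<lambda>\<omega>. 2 * K * inverse (1 + \<omega>^2))"
    using integrable_inverse_1_plus_square by (simp add: set_integrable_def)
  show "AE \<omega> in lborel. norm (norm (G n (hline \<tau> \<omega>) - h \<omega>)) \<le> 2 * K * inverse (1 + \<omega>^2)" for n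
  proof (intro AE_I2)
    fix \<omega>
    have "norm (G n (hline \<tau> \<omega>) - h \<omega>) \<le> norm (G n (hline \<tau> \<omega>)) + norm (h \<omega>)"
      by (rule norm_triangle_ineq4)
    also have "\<dots> \<le> K / (1 + \<omega>^2) + K / (1 + \<omega>^2)"
      using decay[of "hline \<tau> \<omega>" n] h(2)[of \<omega>] assms(1) by (intro add_mono) auto
    finally show "norm (norm (G n (hline \<tau> \<omega>) - h \<omega>)) \<le> 2 * K * inverse (1 + \<omega>^2)"
      by (simp add: divide_inverse)
  qed
  show "AE \<omega> in lborel. (\<lambda>n. norm (G n (hline \<tau> \<omega>) - h \<omega>)) \<longlonglongrightarrow> norm (G_lim (hline \<tau> \<omega>) - h \<omega>)"
    using LIMSEQ[of "hline \<tau> _"] assms(1) by (intro AE_I2 tendsto_norm tendsto_diff tendsto_const) auto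
  show "(\<lambda>\<omega>. norm (G n (hline \<tau> \<omega>) - h \<omega>)) \<in> borel_measurable lborel" for n
    by (rule measurable_compose[OF borel_measurable_diff[OF measurable_G_hline[OF assms(1)] h(1)]
          borel_measurable_norm])
  show "(\<lambda>\<omega>. norm (G_lim (hline \<tau> \<omega>) - h \<omega>)) \<in> borel_measurable lborel"
    by (rule measurable_compose[OF borel_measurable_diff[OF measurable_G_lim_hline[OF assms(1)] h(1)]
          borel_measurable_norm])
qed

definition line_error :: "real \<Rightarrow> nat \<Rightarrow> real" where
  "line_error \<tau> n = integral\<^sup>L lborel (\<lambda>\<omega>. norm (G n (hline \<tau> \<omega>) - G_lim (hline \<tau> \<omega>)))"

lemma line_error_LIMSEQ:
  assumes "\<bar>\<tau>\<bar> \<le> t0"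
  shows "(\<lambda>n. line_error \<tau> n) \<longlonglongrightarrow> 0"
proof -
  have "norm (G_lim (hline \<tau> \<omega>)) \<le> K / (1 + \<omega>^2)" for \<omega>
    using G_lim_decay[of "hline \<tau> \<omega>"] assms by simp
  from tendsto_integral_norm_diff[OF assms measurable_G_lim_hline[OF assms] this]
  show ?thesis by (simp add: line_error_def)
qed

lemma inv_fourier_hline:
  assumes "\<bar>\<tau>\<bar> \<le> t0"
  shows "integrable lborel (\<lambda>\<omega>. G n (hline \<tau> \<omega>) * fourier_kernel x (hline \<tau> \<omega>))"
    and "inv_fourier (\<lambda>w. G n (of_real w)) x =
      integral\<^sup>L lborel (\<lambda>\<omega>. G n (hline \<tau> \<omega>) * fourier_kernel x (hline \<tau> \<omega>))"
proof -
  have strip: "\<bar>Im z\<bar> \<le> t0" if "min 0 \<tau> \<le> Im z" "Im z \<le> max 0 \<tau>" for z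
    using that assms by linarith
  have hol: "(\<lambda>z. G n z * fourier_kernel x z) holomorphic_on {z. \<bar>Im z\<bar> < t1}"
    unfolding fourier_kernel_def by (intro holomorphic_intros holomorphic)
  have "norm (G n z * fourier_kernel x z) \<le> K * exp (2 * pi * \<bar>x\<bar> * t0) / (1 + (Re z)^2)"
    if "\<bar>Im z\<bar> \<le> t0" for z
  proof -
    have "norm (G n z * fourier_kernel x z) \<le> K / (1 + (Re z)^2) * exp (2 * pi * \<bar>x\<bar> * t0)"
      unfolding norm_mult using that decay[OF that] norm_fourier_kernel_le[OF that]
      by (intro mult_mono) (auto simp: K_nonneg)
    then show ?thesis by simp
  qed
  with strip have bound: "norm (G n z * fourier_kernel x z) \<le> K * exp (2 * pi * \<bar>x\<bar> * t0) / (1 + (Re z)^2)"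
    if "min 0 \<tau> \<le> Im z" "Im z \<le> max 0 \<tau>" for z
    using that by blast
  have inside: "z \<in> {z. \<bar>Im z\<bar> < t1}" if "min 0 \<tau> \<le> Im z" "Im z \<le> max 0 \<tau>" for z
    using strip[OF that] width_less by simp
  note shift = lebesgue_integral_hline_shift[OF hol open_convex_horizontal_strip inside bound]
  show "integrable lborel (\<lambda>\<omega>. G n (hline \<tau> \<omega>) * fourier_kernel x (hline \<tau> \<omega>))"
    using shift(1) by simp
  show "inv_fourier (\<lambda>w. G n (of_real w)) x =
      integral\<^sup>L lborel (\<lambda>\<omega>. G n (hline \<tau> \<omega>) * fourier_kernel x (hline \<tau> \<omega>))"
    using shift(2) by (simp add: inv_fourier_eq_kernel)
qed

lemma norm_inv_fourier_diff_le:
  assumes "\<bar>\<tau>\<bar> \<le> t0"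
  shows "norm (inv_fourier (\<lambda>w. G m (of_real w)) x - inv_fourier (\<lambda>w. G n (of_real w)) x)
    \<le> exp (- (2 * pi * x * \<tau>)) * integral\<^sup>L lborel (\<lambda>\<omega>. norm (G m (hline \<tau> \<omega>) - G n (hline \<tau> \<omega>)))"
proof -
  have "norm (inv_fourier (\<lambda>w. G m (of_real w)) x - inv_fourier (\<lambda>w. G n (of_real w)) x)
      \<le> integral\<^sup>L lborel (\<lambda>\<omega>. norm (G m (hline \<tau> \<omega>) * fourier_kernel x (hline \<tau> \<omega>)
            - G n (hline \<tau> \<omega>) * fourier_kernel x (hline \<tau> \<omega>)))"
    unfolding inv_fourier_hline(2)[OF assms]
    by (intro norm_integral_diff_le inv_fourier_hline(1)[OF assms])
  also have "\<dots> = integral\<^sup>L lborel (\<lambda>\<omega>. exp (- (2 * pi * x * \<tau>)) * norm (G m (hline \<tau> \<omega>) - G n (hline \<tau> \<omega>)))"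
    by (simp add: norm_fourier_kernel norm_mult mult.commute flip: left_diff_distrib)
  finally show ?thesis by simp
qed

lemma inv_fourier_LIMSEQ:
  "(\<lambda>n. inv_fourier (\<lambda>w. G n (of_real w)) x) \<longlonglongrightarrow> inv_fourier (\<lambda>w. G_lim (of_real w)) x"
proof -
  have "integrable lborel (\<lambda>w. G_lim (of_real w) * fourier_kernel x (of_real w))"
  proof (rule integrable_lborel_decay)
    have "continuous_on UNIV (\<lambda>w. fourier_kernel x (of_real w))"
      unfolding fourier_kernel_def by (intro continuous_intros)
    then have "(\<lambda>w. fourier_kernel x (of_real w)) \<in> borel_measurable lborel"
      by (simp add: borel_measurable_continuous_onI)
    with measurable_G_lim_hline[of 0] width_nonneg
    show "(\<lambda>w. G_lim (of_real w) * fourier_kernel x (of_real w)) \<in> borel_measurable lborel"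
      by (intro borel_measurable_times) simp_all
    show "norm (G_lim (of_real w) * fourier_kernel x (of_real w)) \<le> K / (1 + w^2)" for w
      using G_lim_decay[of "of_real w"] width_nonneg by (simp add: norm_mult norm_fourier_kernel)
  qed
  then have "norm (inv_fourier (\<lambda>w. G n (of_real w)) x - inv_fourier (\<lambda>w. G_lim (of_real w)) x)
      \<le> integral\<^sup>L lborel (\<lambda>\<omega>. norm (G n (of_real \<omega>) * fourier_kernel x (of_real \<omega>)
            - G_lim (of_real \<omega>) * fourier_kernel x (of_real \<omega>)))" for n
    using inv_fourier_hline(1)[of 0 n x] width_nonneg
    unfolding inv_fourier_eq_kernel by (intro norm_integral_diff_le) auto
  also have "\<dots> n = line_error 0 n" for n
    by (simp add: line_error_def norm_fourier_kernel norm_mult flip: left_diff_distrib)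
  finally have "norm (inv_fourier (\<lambda>w. G n (of_real w)) x - inv_fourier (\<lambda>w. G_lim (of_real w)) x)
      \<le> line_error 0 n" for n .
  then have "(\<lambda>n. inv_fourier (\<lambda>w. G n (of_real w)) x - inv_fourier (\<lambda>w. G_lim (of_real w)) x) \<longlonglongrightarrow> 0"
    using width_nonneg by (intro Lim_null_comparison[OF always_eventually[OF allI] line_error_LIMSEQ[of 0]]) simp_all
  then show ?thesis by (rule LIM_zero_cancel)
qed

lemma weighted_error_le:
  "norm (inv_fourier (\<lambda>w. G_lim (of_real w)) x - inv_fourier (\<lambda>w. G n (of_real w)) x) * exp (2 * pi * t0 * \<bar>x\<bar>)
    \<le> max (line_error t0 n) (line_error (- t0) n)"
proof -
  define \<tau> where "\<tau> = (if x \<ge> 0 then t0 else - t0)"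
  have \<tau>: "\<bar>\<tau>\<bar> \<le> t0" using width_nonneg by (simp add: \<tau>_def)
  have weight: "exp (- (2 * pi * x * \<tau>)) * exp (2 * pi * t0 * \<bar>x\<bar>) = 1"
    by (simp add: \<tau>_def mult_exp_exp)
  have bound: "norm (inv_fourier (\<lambda>w. G m (of_real w)) x - inv_fourier (\<lambda>w. G n (of_real w)) x) * exp (2 * pi * t0 * \<bar>x\<bar>)
      \<le> integral\<^sup>L lborel (\<lambda>\<omega>. norm (G m (hline \<tau> \<omega>) - G n (hline \<tau> \<omega>)))" for m
  proof -
    have "norm (inv_fourier (\<lambda>w. G m (of_real w)) x - inv_fourier (\<lambda>w. G n (of_real w)) x) * exp (2 * pi * t0 * \<bar>x\<bar>)
        \<le> exp (- (2 * pi * x * \<tau>)) * integral\<^sup>L lborel (\<lambda>\<omega>. norm (G m (hline \<tau> \<omega>) - G n (hline \<tau> \<omega>)))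
          * exp (2 * pi * t0 * \<bar>x\<bar>)"
      by (intro mult_right_mono norm_inv_fourier_diff_le[OF \<tau>]) simp
    also have "\<dots> = (exp (- (2 * pi * x * \<tau>)) * exp (2 * pi * t0 * \<bar>x\<bar>))
        * integral\<^sup>L lborel (\<lambda>\<omega>. norm (G m (hline \<tau> \<omega>) - G n (hline \<tau> \<omega>)))"
      by (simp only: ac_simps)
    also have "\<dots> = integral\<^sup>L lborel (\<lambda>\<omega>. norm (G m (hline \<tau> \<omega>) - G n (hline \<tau> \<omega>)))"
      unfolding weight by simp
    finally show ?thesis .
  qed
  have lim_rhs: "(\<lambda>m. integral\<^sup>L lborel (\<lambda>\<omega>. norm (G m (hline \<tau> \<omega>) - G n (hline \<tau> \<omega>))))
      \<longlonglongrightarrow> line_error \<tau> n"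
  proof -
    have "norm (G n (hline \<tau> \<omega>)) \<le> K / (1 + \<omega>^2)" for \<omega>
      using decay[of "hline \<tau> \<omega>" n] \<tau> by simp
    from tendsto_integral_norm_diff[OF \<tau> measurable_G_hline[OF \<tau>] this]
    show ?thesis by (simp add: line_error_def norm_minus_commute)
  qed
  have lim_lhs: "(\<lambda>m. norm (inv_fourier (\<lambda>w. G m (of_real w)) x - inv_fourier (\<lambda>w. G n (of_real w)) x)
      * exp (2 * pi * t0 * \<bar>x\<bar>)) \<longlonglongrightarrow>
      norm (inv_fourier (\<lambda>w. G_lim (of_real w)) x - inv_fourier (\<lambda>w. G n (of_real w)) x) * exp (2 * pi * t0 * \<bar>x\<bar>)"
    by (intro tendsto_mult_right tendsto_norm tendsto_diff inv_fourier_LIMSEQ tendsto_const)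
  have "norm (inv_fourier (\<lambda>w. G_lim (of_real w)) x - inv_fourier (\<lambda>w. G n (of_real w)) x)
      * exp (2 * pi * t0 * \<bar>x\<bar>) \<le> line_error \<tau> n"
    using bound by (intro tendsto_le[OF sequentially_bot lim_rhs lim_lhs] always_eventually) simp
  then show ?thesis by (simp add: \<tau>_def split: if_splits)
qed

theorem uniform_limit_weighted_inv_fourier:
  "uniform_limit UNIV
    (\<lambda>n x. norm (inv_fourier (\<lambda>w. G_lim (of_real w)) x - inv_fourier (\<lambda>w. G n (of_real w)) x)
      * exp (2 * pi * t0 * \<bar>x\<bar>))
    (\<lambda>x. 0) sequentially"
proof (rule uniform_limit_by_LIMSEQ_bound)
  show "(\<lambda>n. max (line_error t0 n) (line_error (- t0) n)) \<longlonglongrightarrow> 0"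
    using tendsto_max[OF line_error_LIMSEQ[of t0] line_error_LIMSEQ[of "- t0"]] width_nonneg by simp
  show "norm (norm (inv_fourier (\<lambda>w. G_lim (of_real w)) x - inv_fourier (\<lambda>w. G n (of_real w)) x)
      * exp (2 * pi * t0 * \<bar>x\<bar>)) \<le> max (line_error t0 n) (line_error (- t0) n)" for n x
    using weighted_error_le[of x n] by simp
qed

end

section \<open>The factors and their products\<close>

definition exp_frac :: "complex \<Rightarrow> complex" where
  "exp_frac u = exp u / (1 + u)"

lemma norm_one_plus_ge: "1 + Re u \<le> norm (1 + u)" "\<bar>Im u\<bar> \<le> norm (1 + u)"
  using abs_Re_le_cmod[of "1 + u"] abs_Im_le_cmod[of "1 + u"] by auto

lemma norm_exp_frac_le:
  assumes "- 1 < Re u"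
  shows "norm (exp_frac u) \<le> exp ((Re u)^2 / (1 + Re u))"
proof -
  define r where "r = Re u"
  have r: "0 < 1 + r" using assms by (simp add: r_def)
  have "norm (exp_frac u) \<le> exp r / (1 + r)"
    unfolding exp_frac_def norm_divide norm_exp_eq_Re r_def using r norm_one_plus_ge(1)[of u]
    by (intro divide_left_mono) (auto simp: r_def intro!: mult_pos_pos)
  also have "\<dots> \<le> exp r * exp (- r / (1 + r))"
  proof -
    have "1 / (1 + r) \<le> exp (- r / (1 + r))"
      using exp_ge_add_one_self[of "- r / (1 + r)"] r by (simp add: field_simps)
    then show ?thesis
      by (simp add: divide_inverse mult_left_mono flip: inverse_eq_divide)
  qed
  also have "\<dots> = exp (r^2 / (1 + r))"
    using r by (simp add: mult_exp_exp field_simps power2_eq_square)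
  finally show ?thesis by (simp add: r_def)
qed

lemma norm_exp_frac_mult_max_le:
  assumes "\<bar>Re u\<bar> \<le> q" "q < 1"
  shows "norm (exp_frac u) * max (1 - q) \<bar>Im u\<bar> \<le> exp q"
proof -
  have pos: "0 < norm (1 + u)" using norm_one_plus_ge(1)[of u] assms by linarith
  have "norm (exp_frac u) * max (1 - q) \<bar>Im u\<bar> \<le> norm (exp_frac u) * norm (1 + u)"
    using norm_one_plus_ge[of u] assms by (intro mult_left_mono) auto
  also have "\<dots> = exp (Re u)"
    using pos by (simp add: exp_frac_def norm_divide)
  also have "\<dots> \<le> exp q" using assms by simp
  finally show ?thesis .
qed

lemma norm_exp_frac_sub_one_le:
  assumes "- 1 < Re u"
  shows "norm (exp_frac u - 1) \<le> norm u ^ 2 * exp (norm u) / (1 + Re u)"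
proof -
  have pos: "0 < norm (1 + u)" using norm_one_plus_ge(1)[of u] assms by linarith
  then have "exp_frac u - 1 = (exp u - (1 + u)) / (1 + u)"
    by (auto simp: exp_frac_def field_simps)
  then have "norm (exp_frac u - 1) = norm (exp u - (\<Sum>i\<le>1. u ^ i / fact i)) / norm (1 + u)"
    by (simp add: norm_divide)
  also have "\<dots> \<le> norm u ^ 2 * exp (norm u) / (1 + Re u)"
    using Taylor_exp_field[of u 1] norm_one_plus_ge(1)[of u] assms
    by (intro frac_le) (auto simp: mult.commute power2_eq_square)
  finally show ?thesis .
qed

lemma max_mult_max_ge:
  fixes c \<alpha> \<beta> x :: real
  assumes "0 < c" "0 \<le> \<alpha>" "0 \<le> \<beta>"
  shows "min (c^2) (\<alpha> * \<beta>) / 2 * (1 + x^2) \<le> max c (\<alpha> * \<bar>x\<bar>) * max c (\<beta> * \<bar>x\<bar>)"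
proof (cases "x^2 \<le> 1")
  case True
  have "min (c^2) (\<alpha> * \<beta>) / 2 * (1 + x^2) \<le> c^2 / 2 * 2"
    using True assms by (intro mult_mono) auto
  also have "\<dots> \<le> max c (\<alpha> * \<bar>x\<bar>) * max c (\<beta> * \<bar>x\<bar>)"
    using assms by (simp add: power2_eq_square mult_mono)
  finally show ?thesis .
next
  case False
  have "min (c^2) (\<alpha> * \<beta>) / 2 * (1 + x^2) \<le> \<alpha> * \<beta> / 2 * (2 * x^2)"
    using False assms by (intro mult_mono) auto
  also have "\<dots> = (\<alpha> * \<bar>x\<bar>) * (\<beta> * \<bar>x\<bar>)"
    by (simp add: power2_eq_square)
  also have "\<dots> \<le> max c (\<alpha> * \<bar>x\<bar>) * max c (\<beta> * \<bar>x\<bar>)"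
    using assms by (intro mult_mono) auto
  finally show ?thesis .
qed

definition ghat_n_ext :: "(nat \<Rightarrow> real) \<Rightarrow> nat \<Rightarrow> complex \<Rightarrow> complex" where
  "ghat_n_ext a n z = (\<Prod>\<nu>\<in>{1..n}. exp_frac (2 * pi * \<i> * z / of_real (a \<nu>)))"

definition ghat_ext :: "(nat \<Rightarrow> real) \<Rightarrow> complex \<Rightarrow> complex" where
  "ghat_ext a z = prodinf (\<lambda>\<nu>. exp_frac (2 * pi * \<i> * z / of_real (a (Suc \<nu>))))"

lemma ghat_n_ext_of_real: "ghat_n_ext a n (of_real w) = ghat_n a n w"
  by (simp add: ghat_n_ext_def ghat_n_def pf_factor_def exp_frac_def)

lemma ghat_ext_of_real: "ghat_ext a (of_real w) = ghat a w"
  by (simp add: ghat_ext_def ghat_def pf_factor_def exp_frac_def)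

lemma abs_Re_Im_pf_arg:
  "\<bar>Re (2 * pi * \<i> * z / of_real b)\<bar> = 2 * pi * \<bar>Im z\<bar> / \<bar>b\<bar>"
  "\<bar>Im (2 * pi * \<i> * z / of_real b)\<bar> = 2 * pi / \<bar>b\<bar> * \<bar>Re z\<bar>"
  by (simp_all add: abs_divide abs_mult)

locale pf_strip =
  fixes a :: "nat \<Rightarrow> real" and a0 t0 :: real
  assumes a0_pos: "0 < a0" and a_ge: "\<And>\<nu>. \<nu> \<ge> 1 \<Longrightarrow> a0 \<le> \<bar>a \<nu>\<bar>"
    and t0_nonneg: "0 \<le> t0" and t0_less: "2 * pi * t0 < a0"
    and summable: "summable (\<lambda>\<nu>. 1 / (a (Suc \<nu>))^2)"
begin

definition q :: real where "q = 2 * pi * t0 / a0"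

lemma q_bounds: "0 \<le> q" "q < 1"
  using a0_pos t0_nonneg t0_less by (auto simp: q_def field_simps)

lemma abs_Re_pf_arg_le:
  assumes "\<nu> \<ge> 1" "\<bar>Im z\<bar> \<le> t"
  shows "\<bar>Re (2 * pi * \<i> * z / of_real (a \<nu>))\<bar> \<le> 2 * pi * t / a0"
proof -
  have "\<bar>Re (2 * pi * \<i> * z / of_real (a \<nu>))\<bar> = 2 * pi * \<bar>Im z\<bar> / \<bar>a \<nu>\<bar>"
    by (rule abs_Re_Im_pf_arg)
  also have "\<dots> \<le> 2 * pi * t / a0"
    using assms a_ge[OF assms(1)] a0_pos by (intro frac_le) auto
  finally show ?thesis .
qed

lemma holomorphic_ghat_n_ext: "ghat_n_ext a n holomorphic_on {z. \<bar>Im z\<bar> < a0 / (2 * pi)}"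
proof -
  have nonzero: "a \<nu> \<noteq> 0" if "\<nu> \<in> {1..n}" for \<nu>
    using a_ge[of \<nu>] that a0_pos by auto
  have denominator: "1 + 2 * pi * \<i> * z / of_real (a \<nu>) \<noteq> 0"
    if "\<nu> \<in> {1..n}" "\<bar>Im z\<bar> < a0 / (2 * pi)" for \<nu> z
  proof -
    have "\<bar>Re (2 * pi * \<i> * z / of_real (a \<nu>))\<bar> \<le> 2 * pi * \<bar>Im z\<bar> / a0"
      using that by (intro abs_Re_pf_arg_le) auto
    also have "\<dots> < 1" using that a0_pos by (simp add: field_simps)
    finally show ?thesis by (auto simp: complex_eq_iff)
  qed
  show ?thesis
    unfolding ghat_n_ext_def exp_frac_def using nonzero denominator
    by (intro holomorphic_on_prod holomorphic_on_divide holomorphic_intros) auto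
qed

lemma abs_Re_pf_arg_le_q:
  assumes "\<nu> \<ge> 1" "\<bar>Im z\<bar> \<le> t0"
  shows "\<bar>Re (2 * pi * \<i> * z / of_real (a \<nu>))\<bar> \<le> q"
  using abs_Re_pf_arg_le[OF assms] by (simp add: q_def)

lemma norm_exp_frac_pf_arg_sub_one_le:
  assumes "\<nu> \<ge> 1" and z: "\<bar>Im z\<bar> \<le> t0"
  shows "norm (exp_frac (2 * pi * \<i> * z / of_real (a \<nu>)) - 1)
    \<le> (2 * pi * norm z)^2 * exp (2 * pi * norm z / a0) / (1 - q) * (1 / (a \<nu>)^2)"
proof -
  define u where "u = 2 * pi * \<i> * z / of_real (a \<nu>)"
  have Re: "\<bar>Re u\<bar> \<le> q" unfolding u_def by (rule abs_Re_pf_arg_le_q[OF assms])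
  have a: "a0 \<le> \<bar>a \<nu>\<bar>" by (rule a_ge[OF assms(1)])
  have norm_u: "norm u = 2 * pi * norm z / \<bar>a \<nu>\<bar>"
    by (simp add: u_def norm_divide norm_mult)
  have "norm (exp_frac u - 1) \<le> norm u ^ 2 * exp (norm u) / (1 + Re u)"
    using Re q_bounds by (intro norm_exp_frac_sub_one_le) linarith
  also have "\<dots> \<le> norm u ^ 2 * exp (2 * pi * norm z / a0) / (1 - q)"
    using Re q_bounds a a0_pos unfolding norm_u
    by (intro frac_le mult_left_mono) (auto intro!: divide_left_mono mult_nonneg_nonneg)
  also have "\<dots> = (2 * pi * norm z)^2 * exp (2 * pi * norm z / a0) / (1 - q) * (1 / (a \<nu>)^2)"
    by (simp add: norm_u power_divide)
  finally show ?thesis by (simp add: u_def)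
qed

lemma ghat_n_ext_LIMSEQ:
  assumes z: "\<bar>Im z\<bar> \<le> t0"
  shows "(\<lambda>n. ghat_n_ext a n z) \<longlonglongrightarrow> ghat_ext a z"
proof -
  define f where "f \<nu> = exp_frac (2 * pi * \<i> * z / of_real (a (Suc \<nu>)))" for \<nu>
  define C where "C = (2 * pi * norm z)^2 * exp (2 * pi * norm z / a0) / (1 - q)"
  have "summable (\<lambda>\<nu>. norm (f \<nu> - 1))"
  proof (rule summable_comparison_test'[OF summable_mult[OF summable, of C]])
    show "norm (norm (f \<nu> - 1)) \<le> C * (1 / (a (Suc \<nu>))^2)" for \<nu>
      using norm_exp_frac_pf_arg_sub_one_le[of "Suc \<nu>" z] z by (simp add: f_def C_def)
  qed
  then have "convergent_prod f"
    by (intro abs_convergent_prod_imp_convergent_prod summable_imp_abs_convergent_prod)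
  then have "(\<lambda>n. \<Prod>\<nu>\<le>n. f \<nu>) \<longlonglongrightarrow> prodinf f"
    by (rule convergent_prod_LIMSEQ)
  moreover have "ghat_n_ext a (Suc n) z = (\<Prod>\<nu>\<le>n. f \<nu>)" for n
    unfolding ghat_n_ext_def f_def by (simp only: One_nat_def prod.atLeast1_atMost_eq lessThan_Suc_atMost)
  moreover have "prodinf f = ghat_ext a z"
    by (simp add: ghat_ext_def f_def[abs_def])
  ultimately have "(\<lambda>n. ghat_n_ext a (Suc n) z) \<longlonglongrightarrow> ghat_ext a z"
    by simp
  then show ?thesis by (rule LIMSEQ_imp_Suc)
qed

lemma norm_exp_frac_pf_arg_le:
  assumes "\<nu> \<ge> 1" and z: "\<bar>Im z\<bar> \<le> t0"
  shows "norm (exp_frac (2 * pi * \<i> * z / of_real (a \<nu>))) \<le> exp ((2 * pi * t0)^2 / (1 - q) * (1 / (a \<nu>)^2))"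
proof -
  define u where "u = 2 * pi * \<i> * z / of_real (a \<nu>)"
  have Re: "\<bar>Re u\<bar> \<le> q" unfolding u_def by (rule abs_Re_pf_arg_le_q[OF assms])
  have "\<bar>Re u\<bar> \<le> 2 * pi * t0 / \<bar>a \<nu>\<bar>"
    using z unfolding u_def abs_Re_Im_pf_arg by (intro divide_right_mono) auto
  then have "(Re u)^2 \<le> (2 * pi * t0)^2 * (1 / (a \<nu>)^2)"
    by (metis abs_ge_zero power2_abs power_divide power_mono times_divide_eq_right mult_1_right)
  have "norm (exp_frac u) \<le> exp ((Re u)^2 / (1 + Re u))"
    using Re q_bounds by (intro norm_exp_frac_le) linarith
  also have "\<dots> \<le> exp ((2 * pi * t0)^2 * (1 / (a \<nu>)^2) / (1 - q))"
    using Re q_bounds \<open>(Re u)^2 \<le> _\<close> by (intro exp_mono frac_le) auto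
  finally show ?thesis by (simp add: u_def mult.commute)
qed

lemma norm_pf_tail_le:
  assumes z: "\<bar>Im z\<bar> \<le> t0"
  shows "norm (\<Prod>\<nu>\<in>{3..n}. exp_frac (2 * pi * \<i> * z / of_real (a \<nu>)))
    \<le> exp ((2 * pi * t0)^2 / (1 - q) * (\<Sum>\<nu>. 1 / (a (Suc \<nu>))^2))"
proof -
  define C where "C = (2 * pi * t0)^2 / (1 - q)"
  have "C \<ge> 0" using q_bounds by (simp add: C_def)
  have "norm (\<Prod>\<nu>\<in>{3..n}. exp_frac (2 * pi * \<i> * z / of_real (a \<nu>)))
      \<le> (\<Prod>\<nu>\<in>{3..n}. exp (C * (1 / (a \<nu>)^2)))"
    unfolding prod_norm[symmetric] C_def using norm_exp_frac_pf_arg_le z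
    by (intro prod_mono) auto
  also have "\<dots> = exp (C * (\<Sum>\<nu>\<in>{3..n}. 1 / (a \<nu>)^2))"
    by (simp add: exp_sum sum_distrib_left)
  also have "\<dots> \<le> exp (C * (\<Sum>\<nu>. 1 / (a (Suc \<nu>))^2))"
  proof -
    have "(\<Sum>\<nu>\<in>{3..n}. 1 / (a \<nu>)^2) \<le> (\<Sum>\<nu>\<in>{1..n}. 1 / (a \<nu>)^2)"
      by (intro sum_mono2) auto
    also have "\<dots> = (\<Sum>\<nu><n. 1 / (a (Suc \<nu>))^2)"
      by (simp only: One_nat_def sum.atLeast1_atMost_eq)
    also have "\<dots> \<le> (\<Sum>\<nu>. 1 / (a (Suc \<nu>))^2)"
      by (intro sum_le_suminf summable) auto
    finally show ?thesis using \<open>C \<ge> 0\<close> by (simp add: mult_left_mono)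
  qed
  finally show ?thesis by (simp add: C_def)
qed

lemma ghat_n_ext_decay:
  obtains K where "\<And>n z. 2 \<le> n \<Longrightarrow> \<bar>Im z\<bar> \<le> t0 \<Longrightarrow> norm (ghat_n_ext a n z) \<le> K / (1 + (Re z)^2)"
proof -
  define M where "M = exp ((2 * pi * t0)^2 / (1 - q) * (\<Sum>\<nu>. 1 / (a (Suc \<nu>))^2))"
  define \<alpha> where "\<alpha> \<nu> = 2 * pi / \<bar>a \<nu>\<bar>" for \<nu>
  define c where "c = min ((1 - q)^2) (\<alpha> 1 * \<alpha> 2) / 2"
  have \<alpha>: "0 < \<alpha> \<nu>" if "\<nu> \<ge> 1" for \<nu>
    using a_ge[OF that] a0_pos by (simp add: \<alpha>_def)
  have c: "0 < c" using \<alpha>[of 1] \<alpha>[of 2] q_bounds by (simp add: c_def)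
  have "norm (ghat_n_ext a n z) \<le> (exp q * exp q * M / c) / (1 + (Re z)^2)"
    if n: "2 \<le> n" and z: "\<bar>Im z\<bar> \<le> t0" for n z
  proof -
    let ?e = "\<lambda>\<nu>. exp_frac (2 * pi * \<i> * z / of_real (a \<nu>))"
    let ?m = "\<lambda>\<nu>. max (1 - q) (\<alpha> \<nu> * \<bar>Re z\<bar>)"
    have factor: "norm (?e \<nu>) * ?m \<nu> \<le> exp q" if "\<nu> \<ge> 1" for \<nu>
      using norm_exp_frac_mult_max_le[OF abs_Re_pf_arg_le_q[OF that z] q_bounds(2)]
      by (simp add: abs_Re_Im_pf_arg \<alpha>_def abs_mult)
    have "{1..n} = insert 1 (insert 2 {3..n})" using n by auto
    then have split: "ghat_n_ext a n z = ?e 1 * ?e 2 * (\<Prod>\<nu>\<in>{3..n}. ?e \<nu>)"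
      by (simp add: ghat_n_ext_def)
    have "c * (1 + (Re z)^2) * norm (ghat_n_ext a n z)
        \<le> ?m 1 * ?m 2 * norm (ghat_n_ext a n z)"
      unfolding c_def using \<alpha>[of 1] \<alpha>[of 2] q_bounds
      by (intro mult_right_mono max_mult_max_ge) auto
    also have "\<dots> = (norm (?e 1) * ?m 1) * (norm (?e 2) * ?m 2) * norm (\<Prod>\<nu>\<in>{3..n}. ?e \<nu>)"
      by (simp add: split norm_mult)
    also have "\<dots> \<le> exp q * exp q * M"
      using factor[of 1] factor[of 2] norm_pf_tail_le[OF z, of n] q_bounds
      by (intro mult_mono) (auto simp: M_def intro!: mult_nonneg_nonneg)
    finally show ?thesis
      using c by (simp add: field_simps add_pos_nonneg)
  qed
  then show ?thesis using that by blast
qed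

lemma uniform_limit_weighted_g:
  "uniform_limit UNIV (\<lambda>n x. cmod (g a x - g_n a n x) * exp (2 * pi * t0 * \<bar>x\<bar>)) (\<lambda>x. 0) sequentially"
proof -
  obtain K where decay: "\<And>n z. 2 \<le> n \<Longrightarrow> \<bar>Im z\<bar> \<le> t0 \<Longrightarrow> norm (ghat_n_ext a n z) \<le> K / (1 + (Re z)^2)"
    using ghat_n_ext_decay by blast
  \<comment> \<open>The index shift by two: neither ghat_n_ext a 0 = 1 nor ghat_n_ext a 1 is integrable on a line.\<close>
  interpret holomorphic_strip_approx "\<lambda>n. ghat_n_ext a (Suc (Suc n))" "ghat_ext a" t0 "a0 / (2 * pi)" K
  proof unfold_locales
    show "0 \<le> t0" by (rule t0_nonneg)
    show "t0 < a0 / (2 * pi)" using t0_less by (simp add: field_simps)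
    show "ghat_n_ext a (Suc (Suc n)) holomorphic_on {z. \<bar>Im z\<bar> < a0 / (2 * pi)}" for n
      by (rule holomorphic_ghat_n_ext)
    show "norm (ghat_n_ext a (Suc (Suc n)) z) \<le> K / (1 + (Re z)^2)" if "\<bar>Im z\<bar> \<le> t0" for n z
      using decay that by simp
    show "(\<lambda>n. ghat_n_ext a (Suc (Suc n)) z) \<longlonglongrightarrow> ghat_ext a z" if "\<bar>Im z\<bar> \<le> t0" for z
      using ghat_n_ext_LIMSEQ[OF that] by (intro LIMSEQ_Suc)
  qed
  define F where "F n x = cmod (g a x - g_n a n x) * exp (2 * pi * t0 * \<bar>x\<bar>)" for n x
  have "uniform_limit UNIV (\<lambda>n. F (Suc (Suc n))) (\<lambda>x. 0) sequentially"
    using uniform_limit_weighted_inv_fourier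
    unfolding F_def g_def g_n_def ghat_ext_of_real ghat_n_ext_of_real by (simp only: eta_contract_eq)
  then have "uniform_limit UNIV F (\<lambda>x. 0) sequentially"
    using filterlim_sequentially_Suc[of "\<lambda>n. F (Suc n)"] filterlim_sequentially_Suc[of F] by simp
  then show ?thesis
    by (simp only: F_def[abs_def])
qed

end

theorem mainTheorem3:
  fixes a :: "nat \<Rightarrow> real" and \<sigma> :: real
  assumes nonzero: "\<And>\<nu>. \<nu> \<ge> 1 \<Longrightarrow> a \<nu> \<noteq> 0"
    and summ: "summable (\<lambda>\<nu>. 1 / (a (Suc \<nu>))\<^sup>2)"
    and sigma_nonneg: "0 \<le> \<sigma>"
    and sigma_less: "\<sigma> < Inf {\<bar>a \<nu>\<bar> | \<nu>. \<nu> \<ge> 1}"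
  shows "uniform_limit UNIV
           (\<lambda>n x. cmod (g a x - g_n a n x) * exp (\<sigma> * \<bar>x\<bar>))
           (\<lambda>x. 0) sequentially"
proof -
  define a0 where "a0 = Inf {\<bar>a \<nu>\<bar> | \<nu>. \<nu> \<ge> 1}"
  define t0 where "t0 = \<sigma> / (2 * pi)"
  have a_ge: "a0 \<le> \<bar>a \<nu>\<bar>" if "\<nu> \<ge> 1" for \<nu>
    unfolding a0_def by (rule cInf_lower) (use that in \<open>auto intro!: bdd_belowI[of _ 0]\<close>)
  interpret pf_strip a a0 t0
  proof unfold_locales
    show "0 < a0" using sigma_nonneg sigma_less by (simp add: a0_def)
    show "2 * pi * t0 < a0" using sigma_less by (simp add: t0_def a0_def)
  qed (use sigma_nonneg a_ge summ in \<open>simp_all add: t0_def\<close>)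
  show ?thesis
    using uniform_limit_weighted_g by (simp add: t0_def)
qed

end
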